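(* Let $0\le\rho\le\eta<1$, $m\in\mathbb{N}$, $n\in\mathbb{N}_0$, $m>n$. Let $f_m(z)=z-\sum_{k=2}^{\infty}|a_k|z^k+(-1)^{m-1}\sum_{k=1}^{\infty}|b_k|\overline{z}^k\in\overline{S}H(m,n,\eta)$ and $F_m(z)=z-\sum_{k=2}^{\infty}|A_k|z^k+(-1)^{m-1}\sum_{k=1}^{\infty}|B_k|\overline{z}^k\in\overline{S}H(m,n,\rho)$. Then the convolution $$(f_m*F_m)(z)=z-\sum_{k=2}^{\infty}|a_k||A_k|z^k+(-1)^{m-1}\sum_{k=1}^{\infty}|b_k||B_k|\overline{z}^k$$ belongs to $\overline{S}H(m,n,\eta)$, and $\overline{S}H(m,n,\eta)\subset\overline{S}H(m,n,\rho)$.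
   Context: Fix real parameters $\alpha,\beta,\gamma,\delta>0$ and $p,q>0$ with $q\le \alpha+p$. For an integer $m\ge 0$ define $C_1(m)=1$ and, for $k\ge 2$, $$C_k(m)=\frac{(m+1)_{k-1}}{(k-1)!}\cdot\frac{\Gamma(\gamma+q(k-1))/\Gamma(\gamma)}{\Gamma(\beta+\alpha(k-1))\,\Gamma(\delta+p(k-1))/\Gamma(\delta)},$$ where $(x)_j=\Gamma(x+j)/\Gamma(x)$. For analytic $\varphi(z)=\sum_{k\ge1}c_kz^k$ on $U=\{|z|<1\}$ set $\Phi^m\varphi(z)=\sum_{k\ge1}C_k(m)c_kz^k$, and for harmonic $f=h+\overline{g}$ set $\Phi^m f=\Phi^m h+(-1)^m\overline{\Phi^m g}$. For $0\le\eta<1$ the class $SH(m,n,\eta)$ consists of harmonic $f=h+\overline g$, univalent and sense-preserving in $U$, with $h(z)=z+\sum_{k\ge2}a_kz^k$, $g(z)=\sum_{k\ge1}b_kz^k$, $|b_1|<1$, and $\operatorname{Re}\bigl(\Phi^m f/\Phi^n f\bigr)>\eta$ in $U$. The class $\overline{S}H(m,n,\eta)$ consists of those $f_m=h+\overline{g_m}\in SH(m,n,\eta)$ with $h(z)=z-\sum_{k\ge2}a_kz^k$, $g_m(z)=(-1)^{m-1}\sum_{k\ge1}b_kz^k$, $a_k,b_k\ge0$. *)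

theory Defs
  imports "HOL-Analysis.Analysis"
begin

text \<open>Coefficient multipliers C_k(m) of the operator Phi^m, depending on the fixed
  real parameters alpha beta gamma delta p q. C_0 is irrelevant (set to 0), C_1 = 1.\<close>
definition Ccoef :: "real \<Rightarrow> real \<Rightarrow> real \<Rightarrow> real \<Rightarrow> real \<Rightarrow> real \<Rightarrow> nat \<Rightarrow> nat \<Rightarrow> real" where
  "Ccoef \<alpha> \<beta> \<gamma> \<delta> p q m k =
     (if k = 0 then 0 else if k = 1 then 1 else
       (pochhammer (real m + 1) (k - 1) / fact (k - 1)) *
       ((Gamma (\<gamma> + q * real (k - 1)) / Gamma \<gamma>) /
        (Gamma (\<beta> + \<alpha> * real (k - 1)) * (Gamma (\<delta> + p * real (k - 1)) / Gamma \<delta>))))"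

definition pser :: "(nat \<Rightarrow> complex) \<Rightarrow> complex \<Rightarrow> complex" where
  "pser c z = (\<Sum>k. c k * z ^ k)"

definition converges_in_disc :: "(nat \<Rightarrow> complex) \<Rightarrow> bool" where
  "converges_in_disc c \<longleftrightarrow> (\<forall>z \<in> ball 0 1. summable (\<lambda>k. c k * z ^ k))"

definition harm :: "(nat \<Rightarrow> complex) \<Rightarrow> (nat \<Rightarrow> complex) \<Rightarrow> complex \<Rightarrow> complex" where
  "harm A B z = pser A z + cnj (pser B z)"

definition PhiOp :: "real \<Rightarrow> real \<Rightarrow> real \<Rightarrow> real \<Rightarrow> real \<Rightarrow> real \<Rightarrow> nat \<Rightarrow>
    (nat \<Rightarrow> complex) \<Rightarrow> (nat \<Rightarrow> complex) \<Rightarrow> complex \<Rightarrow> complex" where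
  "PhiOp \<alpha> \<beta> \<gamma> \<delta> p q m A B z =
     pser (\<lambda>k. complex_of_real (Ccoef \<alpha> \<beta> \<gamma> \<delta> p q m k) * A k) z
     + (-1) ^ m * cnj (pser (\<lambda>k. complex_of_real (Ccoef \<alpha> \<beta> \<gamma> \<delta> p q m k) * B k) z)"

definition SH :: "real \<Rightarrow> real \<Rightarrow> real \<Rightarrow> real \<Rightarrow> real \<Rightarrow> real \<Rightarrow> nat \<Rightarrow> nat \<Rightarrow> real \<Rightarrow>
    (nat \<Rightarrow> complex) \<Rightarrow> (nat \<Rightarrow> complex) \<Rightarrow> bool" where
  "SH \<alpha> \<beta> \<gamma> \<delta> p q m n \<eta> A B \<longleftrightarrow>
     A 0 = 0 \<and> A 1 = 1 \<and> B 0 = 0 \<and> norm (B 1) < 1 \<and>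
     converges_in_disc A \<and> converges_in_disc B \<and>
     inj_on (harm A B) (ball 0 1) \<and>
     (\<forall>z \<in> ball 0 1. norm (deriv (pser B) z) < norm (deriv (pser A) z)) \<and>
     (\<forall>j \<in> {m, n}.
        converges_in_disc (\<lambda>k. complex_of_real (Ccoef \<alpha> \<beta> \<gamma> \<delta> p q j k) * A k) \<and>
        converges_in_disc (\<lambda>k. complex_of_real (Ccoef \<alpha> \<beta> \<gamma> \<delta> p q j k) * B k)) \<and>
     (\<forall>z \<in> ball 0 1 - {0}.
        Re (PhiOp \<alpha> \<beta> \<gamma> \<delta> p q m A B z / PhiOp \<alpha> \<beta> \<gamma> \<delta> p q n A B z) > \<eta>)"

text \<open>The class SHbar(m,n,eta): f_m = h + conj g_m with h = z - sum_{k>=2} a_k z^k,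
  g_m = (-1)^(m-1) sum_{k>=1} b_k z^k, a_k, b_k >= 0 (only a_k for k>=2 and b_k for k>=1 matter).\<close>
definition SHbar :: "real \<Rightarrow> real \<Rightarrow> real \<Rightarrow> real \<Rightarrow> real \<Rightarrow> real \<Rightarrow> nat \<Rightarrow> nat \<Rightarrow> real \<Rightarrow>
    (nat \<Rightarrow> real) \<Rightarrow> (nat \<Rightarrow> real) \<Rightarrow> bool" where
  "SHbar \<alpha> \<beta> \<gamma> \<delta> p q m n \<eta> a b \<longleftrightarrow>
     (\<forall>k\<ge>2. a k \<ge> 0) \<and> (\<forall>k\<ge>1. b k \<ge> 0) \<and>
     SH \<alpha> \<beta> \<gamma> \<delta> p q m n \<eta>
        (\<lambda>k. if k = 0 then 0 else if k = 1 then 1 else - complex_of_real (a k))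
        (\<lambda>k. if k = 0 then 0 else (-1) ^ (m - 1) * complex_of_real (b k))"

end

theory Submission
  imports Defs
begin

(* On the segment [0, 1) the defining conditions of SHbar(m, n, eta) turn into inequalities for
   the nonnegative coefficients a_k, b_k: sense-preservation gives
     sum k a_k t^(k-1) + sum k b_k t^(k-1) < 1,
   and Re (Phi^m f / Phi^n f) > eta, together with Phi^n f(t) > 0 (by connectedness, starting from
   Phi^n f(t) ~ t near 0), gives
     sum (C_k(m) - eta C_k(n)) a_k t^k + sum (C_k(m) + (-1)^(m+n-1) eta C_k(n)) b_k t^k < (1 - eta) t.
   Both inequalities persist when a_k, b_k are decreased to u_k, v_k, and they suffice for membership:
   the first bounds the Lipschitz constants of h(z) - z and g on |z| <= r by numbers with sum < 1
   (univalence) and gives |g'| < |h'|; the second gives |Phi^m - Phi^n| < |Phi^m + (1 - 2 eta) Phi^n|,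
   which means Re (Phi^m / Phi^n) > eta. So SHbar(m, n, eta) is closed under decreasing coefficients.
   The first inequality also bounds every coefficient of a member by 1, so the coefficients of
   f_m * F_m are dominated by those of f_m. *)

section \<open>Power series on the unit disc\<close>

lemma pos_if_nonvanishing_on_unit_interval:
  fixes f :: "real \<Rightarrow> real"
  assumes "\<And>s. 0 \<le> s \<Longrightarrow> s < 1 \<Longrightarrow> isCont f s" and "f 0 > 0"
    and nonzero: "\<And>s. 0 \<le> s \<Longrightarrow> s < 1 \<Longrightarrow> f s \<noteq> 0" and t: "0 \<le> t" "t < 1"
  shows "f t > 0"
proof (rule ccontr)
  assume "\<not> f t > 0"
  then obtain s where "0 \<le> s" "s \<le> t" "f s = 0"
    using IVT2[of f t 0 0] assms by force
  then show False using nonzero t by simp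
qed

lemma powser_pos_if_nonvanishing:
  fixes c :: "nat \<Rightarrow> real"
  assumes summ: "\<And>s. \<bar>s\<bar> < 1 \<Longrightarrow> summable (\<lambda>k. c k * s ^ k)" and "c 0 > 0"
    and "\<And>s. 0 \<le> s \<Longrightarrow> s < 1 \<Longrightarrow> (\<Sum>k. c k * s ^ k) \<noteq> 0" and "0 \<le> t" "t < 1"
  shows "(\<Sum>k. c k * t ^ k) > 0"
proof (rule pos_if_nonvanishing_on_unit_interval[where f = "\<lambda>s. \<Sum>k. c k * s ^ k"])
  show "isCont (\<lambda>s. \<Sum>k. c k * s ^ k) s" if "0 \<le> s" "s < 1" for s
    by (rule isCont_powser[OF summ[of "(s + 1) / 2"]]) (use that in auto)
qed (use assms in auto)

lemma powser_pos_if_nonvanishing_slope: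
  fixes d :: "nat \<Rightarrow> real"
  assumes summ: "\<And>s. \<bar>s\<bar> < 1 \<Longrightarrow> summable (\<lambda>k. d k * s ^ k)" and "d 0 = 0" "d 1 > 0"
    and nonzero: "\<And>s. 0 < s \<Longrightarrow> s < 1 \<Longrightarrow> (\<Sum>k. d k * s ^ k) \<noteq> 0" and t: "0 < t" "t < 1"
  shows "(\<Sum>k. d k * t ^ k) > 0"
proof -
  have split: "(\<Sum>k. d k * s ^ k) = (\<Sum>k. d (Suc k) * s ^ k) * s"
    and summ': "summable (\<lambda>k. d (Suc k) * s ^ k)" if "\<bar>s\<bar> < 1" for s
    using powser_split_head[OF summ[OF that]] \<open>d 0 = 0\<close> by auto
  have "(\<Sum>k. d (Suc k) * t ^ k) > 0"
  proof (rule powser_pos_if_nonvanishing)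
    show "(\<Sum>k. d (Suc k) * s ^ k) \<noteq> 0" if "0 \<le> s" "s < 1" for s
      using that nonzero[of s] split[of s] \<open>d 1 > 0\<close> by (cases "s = 0") auto
  qed (use summ' \<open>d 1 > 0\<close> t in auto)
  then show ?thesis using split[of t] t by simp
qed

lemma sums_lincomb:
  fixes f g :: "nat \<Rightarrow> 'a::{real_normed_field,banach}"
  assumes "summable f" "summable g"
  shows "(\<lambda>k. x * f k + y * g k) sums (x * suminf f + y * suminf g)"
  by (intro sums_add sums_mult summable_sums assms)

lemma norm_power_diff_le:
  fixes z w :: "'a::real_normed_field"
  assumes "norm z \<le> r" "norm w \<le> r"
  shows "norm (z ^ k - w ^ k) \<le> of_nat k * r ^ (k - 1) * norm (z - w)"
proof -
  have r: "0 \<le> r" using assms(1) norm_ge_zero order_trans by blast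
  have "norm (w ^ (k - Suc i) * z ^ i) \<le> r ^ (k - 1)" if "i < k" for i
  proof -
    have "norm (w ^ (k - Suc i) * z ^ i) \<le> r ^ (k - Suc i) * r ^ i"
      unfolding norm_mult norm_power by (intro mult_mono power_mono assms) (use r in auto)
    also have "\<dots> = r ^ (k - 1)" using that by (simp flip: power_add)
    finally show ?thesis .
  qed
  then have "norm (\<Sum>i<k. w ^ (k - Suc i) * z ^ i) \<le> of_nat k * r ^ (k - 1)"
    using order_trans[OF norm_sum sum_bounded_above[of "{..<k}" "\<lambda>i. norm (w ^ (k - Suc i) * z ^ i)"]]
    by simp
  then show ?thesis
    unfolding power_diff_sumr2[of z k w] norm_mult by (simp add: mult.commute mult_left_mono)
qed

text \<open>The points \<open>1\<close> and \<open>2\<eta> - 1\<close> are mirror images in the line \<open>Re w = \<eta>\<close>.\<close>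
lemma Re_divide_gt_if_norm_diff_lt:
  fixes U V :: complex
  assumes "\<eta> < 1" "norm (U - V) < norm (U + of_real (1 - 2 * \<eta>) * V)"
  shows "Re (U / V) > \<eta>"
proof -
  have V: "V \<noteq> 0" using assms by auto
  define w where "w = U / V"
  have "norm (w - 1) * norm V < norm (w + of_real (1 - 2 * \<eta>)) * norm V"
    using assms(2) V by (simp add: w_def algebra_simps flip: norm_mult)
  then have "norm (w - 1) ^ 2 < norm (w + of_real (1 - 2 * \<eta>)) ^ 2"
    using V by (intro power_strict_mono) auto
  then have "(Re w - 1) ^ 2 < (Re w + (1 - 2 * \<eta>)) ^ 2"
    unfolding cmod_power2 by simp
  then have "0 < (1 - \<eta>) * (Re w - \<eta>)"
    by (simp add: power2_eq_square algebra_simps)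
  then show ?thesis using assms(1) by (simp add: w_def zero_less_mult_iff)
qed

text \<open>At \<open>t = 1 - 1/k\<close> the single term \<open>k c\<^sub>k t\<^sup>k\<^sup>-\<^sup>1\<close> of the derivative is at least \<open>c\<^sub>k\<close>,
  by Bernoulli's inequality.\<close>
lemma coeff_le_one_if_deriv_powser_lt_one:
  fixes c :: "nat \<Rightarrow> real"
  assumes nonneg: "\<And>k. 0 \<le> c k"
    and lt_one: "\<And>t. 0 \<le> t \<Longrightarrow> t < 1 \<Longrightarrow> summable (\<lambda>k. diffs c k * t ^ k) \<and> (\<Sum>k. diffs c k * t ^ k) < 1"
    and "1 \<le> k"
  shows "c k \<le> 1"
proof -
  define t :: real where "t = 1 - 1 / k"
  have t: "0 \<le> t" "t < 1" using \<open>1 \<le> k\<close> by (auto simp: t_def field_simps)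
  have "diffs c (k - 1) * t ^ (k - 1) \<le> (\<Sum>j. diffs c j * t ^ j)"
    using sum_le_suminf[of "\<lambda>j. diffs c j * t ^ j" "{k - 1}"] lt_one[OF t] nonneg t
    by (auto simp: diffs_def)
  then have less: "of_nat k * c k * t ^ (k - 1) < 1" using lt_one[OF t] \<open>1 \<le> k\<close> by (simp add: diffs_def)
  have "1 + of_nat (k - 1) * (- 1 / k) \<le> (1 + (- 1 / k)) ^ (k - 1)"
    by (rule Bernoulli_inequality) (use \<open>1 \<le> k\<close> in auto)
  then have "1 \<le> of_nat k * t ^ (k - 1)" using \<open>1 \<le> k\<close> by (simp add: t_def of_nat_diff field_simps)
  then have "c k \<le> c k * (of_nat k * t ^ (k - 1))"
    using mult_left_mono[OF _ nonneg[of k]] by fastforce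
  then show ?thesis using less by (simp add: ac_simps)
qed

lemma pser_of_real:
  fixes c :: "nat \<Rightarrow> real"
  assumes "converges_in_disc (\<lambda>k. of_real (c k))" "\<bar>t\<bar> < 1"
  shows "summable (\<lambda>k. c k * t ^ k)"
    and "pser (\<lambda>k. of_real (c k)) (of_real t) = of_real (\<Sum>k. c k * t ^ k)"
proof -
  have "summable (\<lambda>k. complex_of_real (c k * t ^ k))"
    using assms unfolding converges_in_disc_def by simp
  then show summ: "summable (\<lambda>k. c k * t ^ k)" by (simp only: summable_of_real_iff)
  have "of_real (\<Sum>k. c k * t ^ k) = (\<Sum>k. complex_of_real (c k * t ^ k))"
    by (rule suminf_of_real[OF summ])
  then show "pser (\<lambda>k. of_real (c k)) (of_real t) = of_real (\<Sum>k. c k * t ^ k)"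
    by (simp add: pser_def)
qed

lemma converges_in_disc_lincomb:
  assumes "converges_in_disc c" "converges_in_disc d"
  shows "converges_in_disc (\<lambda>k. x * c k + y * d k)"
  unfolding converges_in_disc_def
proof
  fix z :: complex assume "z \<in> ball 0 1"
  then have "summable (\<lambda>k. x * (c k * z ^ k) + y * (d k * z ^ k))"
    using assms by (intro sums_summable[OF sums_lincomb]) (auto simp: converges_in_disc_def)
  then show "summable (\<lambda>k. (x * c k + y * d k) * z ^ k)"
    by (simp add: algebra_simps)
qed

lemma pser_lincomb:
  assumes "summable (\<lambda>k. c k * z ^ k)" "summable (\<lambda>k. d k * z ^ k)"
  shows "pser (\<lambda>k. x * c k + y * d k) z = x * pser c z + y * pser d z"
  using sums_lincomb[OF assms, of x y] by (simp add: pser_def sums_iff algebra_simps)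

lemma norm_pser_le:
  fixes d :: "nat \<Rightarrow> real"
  assumes dom: "\<And>k. norm (c k) \<le> d k" and summ: "summable (\<lambda>k. d k * r ^ k)" and "norm z \<le> r"
  shows "summable (\<lambda>k. c k * z ^ k)" and "norm (pser c z) \<le> (\<Sum>k. d k * r ^ k)"
proof -
  have bound: "norm (c k * z ^ k) \<le> d k * r ^ k" for k
    unfolding norm_mult norm_power
    by (intro mult_mono dom power_mono \<open>norm z \<le> r\<close>)
      (use dom[of k] in \<open>auto intro: order_trans[OF norm_ge_zero]\<close>)
  show "summable (\<lambda>k. c k * z ^ k)" by (rule summable_comparison_test'[OF summ bound])
  show "norm (pser c z) \<le> (\<Sum>k. d k * r ^ k)" unfolding pser_def by (rule norm_suminf_le[OF bound summ])
qed

lemma converges_in_disc_dominated: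
  fixes d :: "nat \<Rightarrow> real"
  assumes "\<And>k. norm (c k) \<le> d k" "converges_in_disc (\<lambda>k. of_real (d k))"
  shows "converges_in_disc c"
  unfolding converges_in_disc_def
proof
  fix z :: complex assume "z \<in> ball 0 1"
  then show "summable (\<lambda>k. c k * z ^ k)"
    using norm_pser_le(1)[OF assms(1) pser_of_real(1)[OF assms(2), of "norm z"], of z] by simp
qed

lemma norm_pser_diff_le:
  fixes d :: "nat \<Rightarrow> real"
  assumes dom: "\<And>k. norm (c k) \<le> d k" and summ: "summable (\<lambda>k. diffs d k * r ^ k)"
    and "norm z \<le> r" "norm w \<le> r" "summable (\<lambda>k. c k * z ^ k)" "summable (\<lambda>k. c k * w ^ k)"
  shows "norm (pser c z - pser c w) \<le> norm (z - w) * (\<Sum>k. diffs d k * r ^ k)"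
proof -
  have "(\<lambda>k. of_nat (Suc k) * d (Suc k) * r ^ (Suc k - 1)) sums (\<Sum>k. diffs d k * r ^ k)"
    using summable_sums[OF summ] by (simp add: diffs_def)
  then have "(\<lambda>k. of_nat k * d k * r ^ (k - 1)) sums (\<Sum>k. diffs d k * r ^ k)"
    using sums_Suc_iff[of "\<lambda>k. of_nat k * d k * r ^ (k - 1)"] by simp
  then have bound_sums: "(\<lambda>k. norm (z - w) * (of_nat k * d k * r ^ (k - 1)))
      sums (norm (z - w) * (\<Sum>k. diffs d k * r ^ k))"
    by (rule sums_mult)
  have bound: "norm (c k * (z ^ k - w ^ k)) \<le> norm (z - w) * (of_nat k * d k * r ^ (k - 1))" for k
  proof -
    have "norm (c k * (z ^ k - w ^ k)) \<le> d k * (of_nat k * r ^ (k - 1) * norm (z - w))"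
      unfolding norm_mult by (intro mult_mono dom norm_power_diff_le assms)
        (use dom[of k] in \<open>auto intro: order_trans[OF norm_ge_zero]\<close>)
    then show ?thesis by (simp add: ac_simps)
  qed
  have "pser c z - pser c w = (\<Sum>k. c k * (z ^ k - w ^ k))"
    using suminf_diff[OF assms(5,6)] by (simp add: pser_def algebra_simps)
  also have "norm \<dots> \<le> (\<Sum>k. norm (z - w) * (of_nat k * d k * r ^ (k - 1)))"
    by (rule norm_suminf_le[OF bound sums_summable[OF bound_sums]])
  also have "\<dots> = norm (z - w) * (\<Sum>k. diffs d k * r ^ k)"
    by (rule sums_unique[OF bound_sums, symmetric])
  finally show ?thesis .
qed

lemma converges_in_disc_diffs:
  assumes "converges_in_disc c"
  shows "converges_in_disc (diffs c)"
  using assms termdiff_converges[of _ 1 c] by (auto simp: converges_in_disc_def)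

lemma deriv_pser:
  assumes "converges_in_disc c" "norm z < 1"
  shows "deriv (pser c) z = pser (diffs c) z"
  using termdiffs_strong'[of 1 c z] assms DERIV_imp_deriv
  by (auto simp: converges_in_disc_def pser_def[abs_def])

section \<open>Coefficient sequences of \<open>SHbar\<close> and the operators \<open>\<Phi>\<^sup>j\<close>\<close>

text \<open>\<open>h_coeffs a\<close> and \<open>g_coeffs m b\<close> are the coefficients of \<open>h(z) = z - \<Sum> a\<^sub>k z\<^sup>k\<close> and
  \<open>g\<^sub>m(z) = (-1)\<^sup>m\<^sup>-\<^sup>1 \<Sum> b\<^sub>k z\<^sup>k\<close>. \<open>SHbar\<close> ignores \<open>a\<^sub>0, a\<^sub>1, b\<^sub>0\<close>; \<open>coeffs_from\<close> sets them to 0.\<close>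

definition id_coeffs :: "nat \<Rightarrow> real" where
  "id_coeffs k = (if k = 1 then 1 else 0)"

definition h_coeffs :: "(nat \<Rightarrow> real) \<Rightarrow> nat \<Rightarrow> complex" where
  "h_coeffs a k = of_real (id_coeffs k - a k)"

definition g_coeffs :: "nat \<Rightarrow> (nat \<Rightarrow> real) \<Rightarrow> nat \<Rightarrow> complex" where
  "g_coeffs m b k = of_real ((-1) ^ (m - 1) * b k)"

definition coeffs_from :: "nat \<Rightarrow> (nat \<Rightarrow> real) \<Rightarrow> nat \<Rightarrow> real" where
  "coeffs_from j a k = (if j \<le> k then a k else 0)"

lemma SHbar_iff_SH:
  "SHbar \<alpha> \<beta> \<gamma> \<delta> p q m n \<eta> a b \<longleftrightarrow>
     (\<forall>k. 0 \<le> coeffs_from 2 a k) \<and> (\<forall>k. 0 \<le> coeffs_from 1 b k) \<and>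
     SH \<alpha> \<beta> \<gamma> \<delta> p q m n \<eta> (h_coeffs (coeffs_from 2 a)) (g_coeffs m (coeffs_from 1 b))"
proof -
  have "(\<lambda>k. if k = 0 then 0 else if k = 1 then 1 else - complex_of_real (a k))
      = h_coeffs (coeffs_from 2 a)"
    by (auto simp: fun_eq_iff h_coeffs_def id_coeffs_def coeffs_from_def)
  moreover have "(\<lambda>k. if k = 0 then 0 else (-1) ^ (m - 1) * complex_of_real (b k))
      = g_coeffs m (coeffs_from 1 b)"
    by (auto simp: fun_eq_iff g_coeffs_def coeffs_from_def)
  ultimately show ?thesis
    unfolding SHbar_def coeffs_from_def by (auto simp: not_le)
qed

lemma id_coeffs_sums: "(\<lambda>k. of_real (id_coeffs k) * z ^ k) sums (z :: 'a::real_normed_algebra_1)"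
proof -
  have "(\<lambda>k. of_real (id_coeffs k) * z ^ k) = (\<lambda>k. if k = 1 then z ^ k else 0)"
    by (auto simp: fun_eq_iff id_coeffs_def)
  then show ?thesis using sums_single[of 1 "\<lambda>k. z ^ k"] by simp
qed

lemma diffs_id_coeffs_sums:
  "(\<lambda>k. of_real (diffs id_coeffs k) * z ^ k) sums (1 :: 'a::real_normed_algebra_1)"
proof -
  have "(\<lambda>k. of_real (diffs id_coeffs k) * z ^ k) = (\<lambda>k. if k = 0 then 1 else 0)"
    by (auto simp: fun_eq_iff diffs_def id_coeffs_def)
  then show ?thesis using sums_single[of 0 "\<lambda>_. 1 :: 'a"] by simp
qed

lemma diffs_of_real: "diffs (\<lambda>k. of_real (c k)) = (\<lambda>k. of_real (diffs c k))"
  by (simp add: fun_eq_iff diffs_def)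

lemma converges_in_disc_id_coeffs: "converges_in_disc (\<lambda>k. of_real (id_coeffs k))"
  using id_coeffs_sums sums_summable by (auto simp: converges_in_disc_def)

text \<open>The multiplier \<open>w\<close> below is \<open>\<lambda>_. 1\<close> or one of the sequences \<open>Ccoef \<dots> j\<close>; all of them fix
  the coefficient of \<open>z\<close>.\<close>

lemma h_coeffs_mult_eq:
  "w 1 = 1 \<Longrightarrow> of_real (w k) * h_coeffs a k = 1 * of_real (id_coeffs k) + (-1) * of_real (w k * a k)"
  by (simp add: h_coeffs_def id_coeffs_def algebra_simps)

lemma converges_in_disc_h_coeffs_iff:
  assumes "w 1 = 1"
  shows "converges_in_disc (\<lambda>k. of_real (w k) * h_coeffs a k) \<longleftrightarrow>
    converges_in_disc (\<lambda>k. of_real (w k * a k))"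
proof
  assume "converges_in_disc (\<lambda>k. of_real (w k * a k))"
  then have "converges_in_disc (\<lambda>k. 1 * of_real (id_coeffs k) + (-1) * of_real (w k * a k))"
    by (intro converges_in_disc_lincomb converges_in_disc_id_coeffs)
  then show "converges_in_disc (\<lambda>k. of_real (w k) * h_coeffs a k)"
    by (simp only: h_coeffs_mult_eq[of w, OF assms])
next
  assume "converges_in_disc (\<lambda>k. of_real (w k) * h_coeffs a k)"
  then have "converges_in_disc (\<lambda>k. 1 * of_real (id_coeffs k) + (-1) * (of_real (w k) * h_coeffs a k))"
    by (intro converges_in_disc_lincomb converges_in_disc_id_coeffs)
  then show "converges_in_disc (\<lambda>k. of_real (w k * a k))"
    by (simp add: h_coeffs_mult_eq[of w, OF assms])
qed

lemma pser_h_coeffs: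
  assumes "w 1 = 1" "summable (\<lambda>k. of_real (w k * a k) * z ^ k)"
  shows "pser (\<lambda>k. of_real (w k) * h_coeffs a k) z = z - pser (\<lambda>k. of_real (w k * a k)) z"
  using pser_lincomb[OF sums_summable[OF id_coeffs_sums] assms(2), of 1 "-1"] id_coeffs_sums[of z]
  by (simp add: h_coeffs_mult_eq[of w, OF assms(1)] pser_def sums_iff)

lemma converges_in_disc_g_coeffs_iff:
  "converges_in_disc (\<lambda>k. of_real (w k) * g_coeffs m b k) \<longleftrightarrow> converges_in_disc (\<lambda>k. of_real (w k * b k))"
proof -
  have "(\<lambda>k. of_real (w k) * g_coeffs m b k * z ^ k)
      = (\<lambda>k. (-1) ^ (m - 1) * (of_real (w k * b k) * z ^ k))" for z
    by (simp add: fun_eq_iff g_coeffs_def)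
  then show ?thesis by (simp add: converges_in_disc_def)
qed

lemma pser_g_coeffs:
  assumes "summable (\<lambda>k. of_real (w k * b k) * z ^ k)"
  shows "pser (\<lambda>k. of_real (w k) * g_coeffs m b k) z = (-1) ^ (m - 1) * pser (\<lambda>k. of_real (w k * b k)) z"
  using suminf_mult[OF assms, of "(-1) ^ (m - 1)"] by (simp add: pser_def g_coeffs_def ac_simps)

lemma deriv_pser_h_coeffs:
  assumes "converges_in_disc (h_coeffs a)" "norm z < 1"
  shows "deriv (pser (h_coeffs a)) z = 1 - pser (\<lambda>k. of_real (diffs a k)) z"
proof -
  have "converges_in_disc (\<lambda>k. of_real (a k))"
    using assms(1) converges_in_disc_h_coeffs_iff[of "\<lambda>_. 1" a] by simp
  then have "converges_in_disc (\<lambda>k. of_real (diffs a k))"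
    using converges_in_disc_diffs[of "\<lambda>k. of_real (a k)"] by (simp only: diffs_of_real)
  then have "summable (\<lambda>k. of_real (diffs a k) * z ^ k)"
    using assms(2) by (simp add: converges_in_disc_def)
  have "diffs (h_coeffs a) = (\<lambda>k. 1 * of_real (diffs id_coeffs k) + (-1) * of_real (diffs a k))"
    by (simp add: fun_eq_iff diffs_def h_coeffs_def algebra_simps)
  then have "deriv (pser (h_coeffs a)) z
      = pser (\<lambda>k. 1 * of_real (diffs id_coeffs k) + (-1) * of_real (diffs a k)) z"
    using deriv_pser[OF assms] by simp
  also have "\<dots> = 1 * pser (\<lambda>k. of_real (diffs id_coeffs k)) z + (-1) * pser (\<lambda>k. of_real (diffs a k)) z"
    by (rule pser_lincomb[OF sums_summable[OF diffs_id_coeffs_sums] \<open>summable _\<close>])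
  also have "\<dots> = 1 - pser (\<lambda>k. of_real (diffs a k)) z"
    using diffs_id_coeffs_sums[of z] by (simp add: pser_def sums_iff)
  finally show ?thesis .
qed

lemma deriv_pser_g_coeffs:
  assumes "converges_in_disc (g_coeffs m b)" "norm z < 1"
  shows "deriv (pser (g_coeffs m b)) z = (-1) ^ (m - 1) * pser (\<lambda>k. of_real (diffs b k)) z"
proof -
  have "converges_in_disc (\<lambda>k. of_real (b k))"
    using assms(1) converges_in_disc_g_coeffs_iff[of "\<lambda>_. 1" m b] by simp
  then have "converges_in_disc (\<lambda>k. of_real (diffs b k))"
    using converges_in_disc_diffs[of "\<lambda>k. of_real (b k)"] by (simp only: diffs_of_real)
  then have "summable (\<lambda>k. of_real (diffs b k) * z ^ k)"
    using assms(2) by (simp add: converges_in_disc_def)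
  moreover have "diffs (g_coeffs m b) = (\<lambda>k. (-1) ^ (m - 1) * of_real (diffs b k))"
    by (simp add: fun_eq_iff diffs_def g_coeffs_def algebra_simps)
  ultimately show ?thesis
    using deriv_pser[OF assms] suminf_mult by (simp add: pser_def mult.assoc)
qed

lemma Ccoef_one [simp]: "Ccoef \<alpha> \<beta> \<gamma> \<delta> p q j 1 = 1" "Ccoef \<alpha> \<beta> \<gamma> \<delta> p q j (Suc 0) = 1"
  by (simp_all add: Ccoef_def)

lemma pochhammer_mono:
  fixes x y :: real
  assumes "0 < x" "x \<le> y"
  shows "pochhammer x k \<le> pochhammer y k"
proof (induction k)
  case (Suc k)
  then show ?case
    using assms pochhammer_pos[of x k] by (auto simp: pochhammer_Suc intro!: mult_mono)
qed simp

lemma Gamma_quotient_pos: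
  fixes \<alpha> \<beta> \<gamma> \<delta> p q x :: real
  assumes "0 < \<alpha>" "0 < \<beta>" "0 < \<gamma>" "0 < \<delta>" "0 < p" "0 < q" "0 \<le> x"
  shows "0 < (Gamma (\<gamma> + q * x) / Gamma \<gamma>) / (Gamma (\<beta> + \<alpha> * x) * (Gamma (\<delta> + p * x) / Gamma \<delta>))"
proof -
  have "0 < \<gamma> + q * x" by (intro add_pos_nonneg mult_nonneg_nonneg) (use assms in auto)
  moreover have "0 < \<beta> + \<alpha> * x" by (intro add_pos_nonneg mult_nonneg_nonneg) (use assms in auto)
  moreover have "0 < \<delta> + p * x" by (intro add_pos_nonneg mult_nonneg_nonneg) (use assms in auto)
  ultimately show ?thesis
    by (intro divide_pos_pos mult_pos_pos Gamma_real_pos) (use assms in auto)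
qed

lemma Ccoef_nonneg:
  assumes "0 < \<alpha>" "0 < \<beta>" "0 < \<gamma>" "0 < \<delta>" "0 < p" "0 < q"
  shows "0 \<le> Ccoef \<alpha> \<beta> \<gamma> \<delta> p q j k"
  using mult_nonneg_nonneg[OF divide_nonneg_pos[OF pochhammer_nonneg fact_gt_zero]
      less_imp_le[OF Gamma_quotient_pos[OF assms, of "real (k - 1)"]], of "real j + 1" "k - 1" "k - 1"]
  unfolding Ccoef_def by auto

lemma Ccoef_mono:
  assumes "0 < \<alpha>" "0 < \<beta>" "0 < \<gamma>" "0 < \<delta>" "0 < p" "0 < q" "n \<le> m"
  shows "Ccoef \<alpha> \<beta> \<gamma> \<delta> p q n k \<le> Ccoef \<alpha> \<beta> \<gamma> \<delta> p q m k"
  using mult_right_mono[OF divide_right_mono[OF pochhammer_mono[of "real n + 1" "real m + 1" "k - 1"]]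
      less_imp_le[OF Gamma_quotient_pos[OF assms(1-6), of "real (k - 1)"]], of "fact (k - 1)"] assms(7)
  unfolding Ccoef_def by auto

lemma PhiOp_h_g_coeffs:
  assumes "summable (\<lambda>k. of_real (Ccoef \<alpha> \<beta> \<gamma> \<delta> p q j k * a k) * z ^ k)"
    "summable (\<lambda>k. of_real (Ccoef \<alpha> \<beta> \<gamma> \<delta> p q j k * b k) * z ^ k)"
  shows "PhiOp \<alpha> \<beta> \<gamma> \<delta> p q j (h_coeffs a) (g_coeffs m b) z =
    z - pser (\<lambda>k. of_real (Ccoef \<alpha> \<beta> \<gamma> \<delta> p q j k * a k)) z
      + (-1) ^ j * (-1) ^ (m - 1) * cnj (pser (\<lambda>k. of_real (Ccoef \<alpha> \<beta> \<gamma> \<delta> p q j k * b k)) z)"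
  unfolding PhiOp_def pser_h_coeffs[OF Ccoef_one(1) assms(1)] pser_g_coeffs[OF assms(2)] by simp

lemma neg_one_power_mult_pred: "1 \<le> m \<Longrightarrow> (-1) ^ m * (-1) ^ (m - 1) = (-1 :: 'a::ring_1)"
  by (cases m) (simp_all flip: power_add mult_2)

section \<open>Coefficient inequalities for members of \<open>SHbar\<close>\<close>

locale SH_nonneg_coeffs =
  fixes \<alpha> \<beta> \<gamma> \<delta> p q :: real and m n :: nat and \<eta> :: real and a b :: "nat \<Rightarrow> real"
  assumes a_nonneg: "\<And>k. 0 \<le> a k" and b_nonneg: "\<And>k. 0 \<le> b k"
    and SH: "SH \<alpha> \<beta> \<gamma> \<delta> p q m n \<eta> (h_coeffs a) (g_coeffs m b)"
begin

abbreviation C :: "nat \<Rightarrow> nat \<Rightarrow> real" where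
  "C \<equiv> Ccoef \<alpha> \<beta> \<gamma> \<delta> p q"

abbreviation Phi :: "nat \<Rightarrow> complex \<Rightarrow> complex" where
  "Phi j \<equiv> PhiOp \<alpha> \<beta> \<gamma> \<delta> p q j (h_coeffs a) (g_coeffs m b)"

lemma initial_coeffs: "a 0 = 0" "a 1 = 0" "b 0 = 0" "b 1 < 1"
  using SH b_nonneg[of 1]
  by (auto simp: SH_def h_coeffs_def g_coeffs_def id_coeffs_def norm_mult norm_power)

lemma converges_in_disc_a: "converges_in_disc (\<lambda>k. of_real (a k))"
  using SH converges_in_disc_h_coeffs_iff[of "\<lambda>_. 1" a] by (simp add: SH_def)

lemma converges_in_disc_b: "converges_in_disc (\<lambda>k. of_real (b k))"
  using SH converges_in_disc_g_coeffs_iff[of "\<lambda>_. 1" m b] by (simp add: SH_def)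

lemma converges_in_disc_C_a: "j \<in> {m, n} \<Longrightarrow> converges_in_disc (\<lambda>k. of_real (C j k * a k))"
  using SH converges_in_disc_h_coeffs_iff[of "C j" a, OF Ccoef_one(1)] by (auto simp: SH_def)

lemma converges_in_disc_C_b: "j \<in> {m, n} \<Longrightarrow> converges_in_disc (\<lambda>k. of_real (C j k * b k))"
  using SH converges_in_disc_g_coeffs_iff[of "C j" m b] by (auto simp: SH_def)

lemma Phi_eq:
  assumes "j \<in> {m, n}" "norm z < 1"
  shows "Phi j z =
    z - pser (\<lambda>k. of_real (C j k * a k)) z
      + (-1) ^ j * (-1) ^ (m - 1) * cnj (pser (\<lambda>k. of_real (C j k * b k)) z)"
  using PhiOp_h_g_coeffs converges_in_disc_C_a[OF assms(1)] converges_in_disc_C_b[OF assms(1)] assms(2)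
  by (simp add: converges_in_disc_def)

lemma Phi_of_real:
  assumes "j \<in> {m, n}" "\<bar>t\<bar> < 1"
  shows "Phi j (of_real t) =
    of_real (t - (\<Sum>k. C j k * a k * t ^ k) + (-1) ^ j * (-1) ^ (m - 1) * (\<Sum>k. C j k * b k * t ^ k))"
  using Phi_eq[OF assms(1)] assms(2) pser_of_real(2)[OF converges_in_disc_C_a[OF assms(1)] assms(2)]
    pser_of_real(2)[OF converges_in_disc_C_b[OF assms(1)] assms(2)]
  by simp

lemma deriv_sums_lt_one:
  assumes "0 \<le> t" "t < 1"
  shows "summable (\<lambda>k. diffs a k * t ^ k)" "summable (\<lambda>k. diffs b k * t ^ k)"
    and "(\<Sum>k. diffs a k * t ^ k) + (\<Sum>k. diffs b k * t ^ k) < 1"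
proof -
  have conv: "converges_in_disc (\<lambda>k. of_real (diffs a k))" "converges_in_disc (\<lambda>k. of_real (diffs b k))"
    using converges_in_disc_diffs[OF converges_in_disc_a] converges_in_disc_diffs[OF converges_in_disc_b]
    by (simp_all add: diffs_of_real)
  then show "summable (\<lambda>k. diffs a k * t ^ k)" "summable (\<lambda>k. diffs b k * t ^ k)"
    using pser_of_real(1) assms by auto
  define Da Db where "Da s = (\<Sum>k. diffs a k * s ^ k)" and "Db s = (\<Sum>k. diffs b k * s ^ k)" for s
  have sense: "\<bar>Db s\<bar> < \<bar>1 - Da s\<bar>" if "\<bar>s\<bar> < 1" for s
  proof -
    have "norm (deriv (pser (g_coeffs m b)) (of_real s)) < norm (deriv (pser (h_coeffs a)) (of_real s))"
      using SH that by (simp add: SH_def)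
    moreover have "deriv (pser (h_coeffs a)) (of_real s) = of_real (1 - Da s)"
      using SH that deriv_pser_h_coeffs[of a "of_real s"] pser_of_real(2)[OF conv(1) that]
      by (simp add: SH_def Da_def)
    moreover have "deriv (pser (g_coeffs m b)) (of_real s) = of_real ((-1) ^ (m - 1) * Db s)"
      using SH that deriv_pser_g_coeffs[of m b "of_real s"] pser_of_real(2)[OF conv(2) that]
      by (simp add: SH_def Db_def)
    moreover have "norm (1 - complex_of_real x) = \<bar>1 - x\<bar>" for x
      by (metis norm_of_real of_real_1 of_real_diff)
    ultimately show ?thesis by (simp add: norm_mult norm_power)
  qed
  have "0 < 1 - Da t"
  proof (rule pos_if_nonvanishing_on_unit_interval[where f = "\<lambda>s. 1 - Da s"])
    show "isCont (\<lambda>s. 1 - Da s) s" if "0 \<le> s" "s < 1" for s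
      unfolding Da_def
      by (intro isCont_diff continuous_const
          isCont_powser[OF pser_of_real(1)[OF conv(1), of "(s + 1) / 2"]])
        (use that in auto)
    show "1 - Da s \<noteq> 0" if "0 \<le> s" "s < 1" for s
      using sense[of s] that by auto
  qed (use assms initial_coeffs in \<open>auto simp: Da_def diffs_def\<close>)
  moreover have "0 \<le> Db t"
    unfolding Db_def
    by (intro suminf_nonneg pser_of_real(1)[OF conv(2)]) (use assms b_nonneg in \<open>auto simp: diffs_def\<close>)
  ultimately show "(\<Sum>k. diffs a k * t ^ k) + (\<Sum>k. diffs b k * t ^ k) < 1"
    using sense[of t] assms by (simp add: Da_def Db_def)
qed

lemma coeffs_le_one: "a k \<le> 1" "b k \<le> 1"
proof -
  have diffs_sum_nonneg: "0 \<le> (\<Sum>k. diffs c k * t ^ k)"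
    if "summable (\<lambda>k. diffs c k * t ^ k)" "\<And>k. 0 \<le> c k" "0 \<le> t" for c :: "nat \<Rightarrow> real" and t :: real
    by (intro suminf_nonneg that) (use that in \<open>auto simp: diffs_def\<close>)
  have "a k \<le> 1 \<and> b k \<le> 1" if "1 \<le> k"
  proof
    show "a k \<le> 1"
      by (rule coeff_le_one_if_deriv_powser_lt_one[OF a_nonneg _ that])
        (use deriv_sums_lt_one diffs_sum_nonneg b_nonneg in \<open>fastforce\<close>)
    show "b k \<le> 1"
      by (rule coeff_le_one_if_deriv_powser_lt_one[OF b_nonneg _ that])
        (use deriv_sums_lt_one diffs_sum_nonneg a_nonneg in \<open>fastforce\<close>)
  qed
  then show "a k \<le> 1" "b k \<le> 1"
    using initial_coeffs by (cases "k = 0"; force)+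
qed

lemma Phi_n_of_real_pos:
  assumes "0 \<le> \<eta>" "0 < t" "t < 1"
  shows "0 < t - (\<Sum>k. C n k * a k * t ^ k) + (-1) ^ n * (-1) ^ (m - 1) * (\<Sum>k. C n k * b k * t ^ k)"
proof -
  define s :: real where "s = (-1) ^ n * (-1) ^ (m - 1)"
  define d where "d k = id_coeffs k - C n k * a k + s * (C n k * b k)" for k
  have d_sums: "(\<lambda>k. d k * x ^ k) sums (x - (\<Sum>k. C n k * a k * x ^ k) + s * (\<Sum>k. C n k * b k * x ^ k))"
    if "\<bar>x\<bar> < 1" for x
  proof -
    have "(\<lambda>k. id_coeffs k * x ^ k - C n k * a k * x ^ k + s * (C n k * b k * x ^ k)) sums
        (x - (\<Sum>k. C n k * a k * x ^ k) + s * (\<Sum>k. C n k * b k * x ^ k))"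
      using id_coeffs_sums[of x] pser_of_real(1)[OF converges_in_disc_C_a that]
        pser_of_real(1)[OF converges_in_disc_C_b that]
      by (intro sums_add sums_diff sums_mult summable_sums) auto
    then show ?thesis by (simp add: d_def algebra_simps)
  qed
  have "0 < (\<Sum>k. d k * t ^ k)"
  proof (rule powser_pos_if_nonvanishing_slope)
    show "summable (\<lambda>k. d k * x ^ k)" if "\<bar>x\<bar> < 1" for x
      using d_sums[OF that] by (rule sums_summable)
    have "\<bar>s\<bar> = 1" by (simp add: s_def abs_mult)
    then have "- b 1 \<le> s * b 1" using b_nonneg[of 1] by (auto simp: abs_if split: if_splits)
    then show "0 < d 1" using initial_coeffs by (simp add: d_def id_coeffs_def)
    show "(\<Sum>k. d k * x ^ k) \<noteq> 0" if "0 < x" "x < 1" for x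
    proof
      assume "(\<Sum>k. d k * x ^ k) = 0"
      then have "x - (\<Sum>k. C n k * a k * x ^ k) + s * (\<Sum>k. C n k * b k * x ^ k) = 0"
        using d_sums[of x] that by (simp add: sums_iff)
      then have "Phi n (of_real x) = 0"
        using Phi_of_real[of n x] that unfolding s_def by simp
      moreover have "\<eta> < Re (Phi m (of_real x) / Phi n (of_real x))"
        using SH that by (simp add: SH_def)
      ultimately show False \<comment> \<open>division by \<open>0\<close> yields \<open>0\<close>, and \<open>\<eta> \<ge> 0\<close>\<close>
        using \<open>0 \<le> \<eta>\<close> by simp
    qed
  qed (use initial_coeffs assms in \<open>auto simp: d_def id_coeffs_def\<close>)
  then show ?thesis using d_sums[of t] assms by (simp add: s_def sums_iff)
qed

definition mixed_coeffs :: "real \<Rightarrow> (nat \<Rightarrow> real) \<Rightarrow> nat \<Rightarrow> real" where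
  "mixed_coeffs \<kappa> w k = (C m k + \<kappa> * C n k) * w k"

lemma sums_mixed_coeffs:
  fixes z :: "'a::{real_normed_field,banach}"
  assumes "summable (\<lambda>k. of_real (C m k * w k) * z ^ k)" "summable (\<lambda>k. of_real (C n k * w k) * z ^ k)"
  shows "(\<lambda>k. of_real (mixed_coeffs \<kappa> w k) * z ^ k) sums
    ((\<Sum>k. of_real (C m k * w k) * z ^ k) + of_real \<kappa> * (\<Sum>k. of_real (C n k * w k) * z ^ k))"
  using sums_lincomb[OF assms, of 1 "of_real \<kappa>"] by (simp add: mixed_coeffs_def algebra_simps)

lemma sums_mixed_coeffs_real:
  assumes "w \<in> {a, b}" "\<bar>t\<bar> < 1"
  shows "(\<lambda>k. mixed_coeffs \<kappa> w k * t ^ k)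
    sums ((\<Sum>k. C m k * w k * t ^ k) + \<kappa> * (\<Sum>k. C n k * w k * t ^ k))"
proof -
  have "summable (\<lambda>k. C j k * w k * t ^ k)" if "j \<in> {m, n}" for j
    using assms that pser_of_real(1)[OF converges_in_disc_C_a] pser_of_real(1)[OF converges_in_disc_C_b]
    by auto
  then show ?thesis using sums_mixed_coeffs[of w t \<kappa>] by simp
qed

lemma mixed_coeffs_sum_lt:
  assumes "0 \<le> \<eta>" "1 \<le> m" "0 < t" "t < 1"
  shows "(\<Sum>k. mixed_coeffs (- \<eta>) a k * t ^ k)
      + (\<Sum>k. mixed_coeffs ((-1) ^ n * (-1) ^ (m - 1) * \<eta>) b k * t ^ k)
    < (1 - \<eta>) * t"
proof -
  define s :: real where "s = (-1) ^ n * (-1) ^ (m - 1)"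
  define A B where "A j = (\<Sum>k. C j k * a k * t ^ k)" and "B j = (\<Sum>k. C j k * b k * t ^ k)" for j
  have t: "\<bar>t\<bar> < 1" using assms by simp
  have Phi_m: "Phi m (of_real t) = of_real (t - A m - B m)"
    using Phi_of_real[of m t] t neg_one_power_mult_pred[OF \<open>1 \<le> m\<close>, where 'a = complex]
    by (simp add: A_def B_def)
  have Phi_n: "Phi n (of_real t) = of_real (t - A n + s * B n)"
    using Phi_of_real[of n t] t by (simp add: A_def B_def s_def)
  have "0 < t - A n + s * B n"
    using Phi_n_of_real_pos assms by (simp add: A_def B_def s_def)
  moreover have "\<eta> < Re (Phi m (of_real t) / Phi n (of_real t))"
    using SH assms by (simp add: SH_def)
  ultimately have "\<eta> * (t - A n + s * B n) < t - A m - B m"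
    unfolding Phi_m Phi_n by (simp flip: of_real_divide add: pos_less_divide_eq)
  moreover have "(\<Sum>k. mixed_coeffs (- \<eta>) a k * t ^ k) = A m - \<eta> * A n"
    using sums_mixed_coeffs_real[of a t "- \<eta>"] t by (simp add: A_def sums_iff)
  moreover have "(\<Sum>k. mixed_coeffs (s * \<eta>) b k * t ^ k) = B m + s * \<eta> * B n"
    using sums_mixed_coeffs_real[of b t "s * \<eta>"] t by (simp add: B_def sums_iff)
  ultimately show ?thesis by (simp add: s_def algebra_simps)
qed

end

section \<open>Decreasing the coefficients\<close>

locale SH_dominated = SH_nonneg_coeffs +
  fixes u v :: "nat \<Rightarrow> real"
  assumes u_nonneg: "\<And>k. 0 \<le> u k" and u_le: "\<And>k. u k \<le> a k"
    and v_nonneg: "\<And>k. 0 \<le> v k" and v_le: "\<And>k. v k \<le> b k"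
    and Ccoef_n_nonneg: "\<And>k. 0 \<le> Ccoef \<alpha> \<beta> \<gamma> \<delta> p q n k"
    and Ccoef_n_le_m: "\<And>k. Ccoef \<alpha> \<beta> \<gamma> \<delta> p q n k \<le> Ccoef \<alpha> \<beta> \<gamma> \<delta> p q m k"
begin

abbreviation Phi_uv :: "nat \<Rightarrow> complex \<Rightarrow> complex" where
  "Phi_uv j \<equiv> PhiOp \<alpha> \<beta> \<gamma> \<delta> p q j (h_coeffs u) (g_coeffs m v)"

lemma C_nonneg: "j \<in> {m, n} \<Longrightarrow> 0 \<le> C j k"
  using Ccoef_n_nonneg[of k] Ccoef_n_le_m[of k] by auto

lemma converges_in_disc_u: "converges_in_disc (\<lambda>k. of_real (u k))"
  by (rule converges_in_disc_dominated[OF _ converges_in_disc_a]) (use u_nonneg u_le in auto)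

lemma converges_in_disc_v: "converges_in_disc (\<lambda>k. of_real (v k))"
  by (rule converges_in_disc_dominated[OF _ converges_in_disc_b]) (use v_nonneg v_le in auto)

lemma converges_in_disc_h_g_coeffs_u_v:
  "converges_in_disc (h_coeffs u)" "converges_in_disc (g_coeffs m v)"
  using converges_in_disc_h_coeffs_iff[of "\<lambda>_. 1" u] converges_in_disc_g_coeffs_iff[of "\<lambda>_. 1" m v]
    converges_in_disc_u converges_in_disc_v by simp_all

lemma converges_in_disc_C_u: "j \<in> {m, n} \<Longrightarrow> converges_in_disc (\<lambda>k. of_real (C j k * u k))"
  by (rule converges_in_disc_dominated[OF _ converges_in_disc_C_a])
    (use mult_left_mono[OF u_le C_nonneg] C_nonneg u_nonneg in \<open>simp_all add: norm_mult\<close>)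

lemma converges_in_disc_C_v: "j \<in> {m, n} \<Longrightarrow> converges_in_disc (\<lambda>k. of_real (C j k * v k))"
  by (rule converges_in_disc_dominated[OF _ converges_in_disc_C_b])
    (use mult_left_mono[OF v_le C_nonneg] C_nonneg v_nonneg in \<open>simp_all add: norm_mult\<close>)

lemma harm_eq:
  assumes "norm z < 1"
  shows "harm (h_coeffs u) (g_coeffs m v) z =
    z - pser (\<lambda>k. of_real (u k)) z + (-1) ^ (m - 1) * cnj (pser (\<lambda>k. of_real (v k)) z)"
  using pser_h_coeffs[of "\<lambda>_. 1" u z] pser_g_coeffs[of "\<lambda>_. 1" v z m]
    converges_in_disc_u converges_in_disc_v assms
  by (simp add: harm_def converges_in_disc_def)

lemma inj_on_harm: "inj_on (harm (h_coeffs u) (g_coeffs m v)) (ball 0 1)"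
proof (rule inj_onI, rule ccontr)
  fix z w assume z: "z \<in> ball 0 1" and w: "w \<in> ball 0 1" and "z \<noteq> w"
    and eq: "harm (h_coeffs u) (g_coeffs m v) z = harm (h_coeffs u) (g_coeffs m v) w"
  define r where "r = max (norm z) (norm w)"
  have r: "0 \<le> r" "r < 1" "norm z \<le> r" "norm w \<le> r" using z w by (auto simp: r_def le_max_iff_disj)
  define P where "P c x = pser (\<lambda>k. of_real (c k)) x" for c x
  have lipschitz: "norm (P c z - P c w) \<le> norm (z - w) * (\<Sum>k. diffs d k * r ^ k)"
    if "\<And>k. 0 \<le> c k" "\<And>k. c k \<le> d k" "summable (\<lambda>k. diffs d k * r ^ k)"
      "converges_in_disc (\<lambda>k. of_real (c k))" for c d
    unfolding P_def
    by (rule norm_pser_diff_le[OF _ that(3) r(3,4)]) (use that z w in \<open>auto simp: converges_in_disc_def\<close>)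
  have "z - P u z + (-1) ^ (m - 1) * cnj (P v z) = w - P u w + (-1) ^ (m - 1) * cnj (P v w)"
    using eq z w by (simp only: harm_eq P_def mem_ball_0)
  then have "z - w = (P u z - P u w) - (-1) ^ (m - 1) * cnj (P v z - P v w)"
    by (simp add: algebra_simps)
  moreover have "norm ((-1) ^ (m - 1) * cnj (P v z - P v w)) = norm (P v z - P v w)"
    by (simp only: norm_mult norm_power complex_mod_cnj norm_minus_cancel norm_one power_one mult_1_left)
  ultimately have "norm (z - w) \<le> norm (P u z - P u w) + norm (P v z - P v w)"
    by (metis norm_triangle_ineq4)
  also have "\<dots> \<le> norm (z - w) * ((\<Sum>k. diffs a k * r ^ k) + (\<Sum>k. diffs b k * r ^ k))"
    using lipschitz[OF u_nonneg u_le deriv_sums_lt_one(1)[OF r(1,2)] converges_in_disc_u]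
      lipschitz[OF v_nonneg v_le deriv_sums_lt_one(2)[OF r(1,2)] converges_in_disc_v]
    by (simp add: algebra_simps)
  also have "\<dots> < norm (z - w)"
    using deriv_sums_lt_one(3)[OF r(1,2)] \<open>z \<noteq> w\<close> by simp
  finally show False by simp
qed

lemma sense_preserving:
  assumes "z \<in> ball 0 1"
  shows "norm (deriv (pser (g_coeffs m v)) z) < norm (deriv (pser (h_coeffs u)) z)"
proof -
  define r where "r = norm z"
  have r: "0 \<le> r" "r < 1" using assms by (auto simp: r_def)
  have bound: "norm (pser (\<lambda>k. of_real (diffs c k)) z) \<le> (\<Sum>k. diffs d k * r ^ k)"
    if "\<And>k. 0 \<le> c k" "\<And>k. c k \<le> d k" "summable (\<lambda>k. diffs d k * r ^ k)" for c d
  proof (rule norm_pser_le(2)[OF _ that(3)])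
    show "norm (of_real (diffs c k) :: complex) \<le> diffs d k" for k
      unfolding norm_of_real diffs_def using that(1,2)[of "Suc k"] by (simp add: abs_mult)
  qed (simp add: r_def)
  have "norm (deriv (pser (g_coeffs m v)) z) \<le> (\<Sum>k. diffs b k * r ^ k)"
    using deriv_pser_g_coeffs[OF converges_in_disc_h_g_coeffs_u_v(2)] bound[OF v_nonneg v_le deriv_sums_lt_one(2)[OF r]] assms
    by (simp add: norm_mult norm_power)
  also have "\<dots> < 1 - (\<Sum>k. diffs a k * r ^ k)"
    using deriv_sums_lt_one(3)[OF r] by simp
  also have "\<dots> \<le> norm (deriv (pser (h_coeffs u)) z)"
    using deriv_pser_h_coeffs[OF converges_in_disc_h_g_coeffs_u_v(1)] bound[OF u_nonneg u_le deriv_sums_lt_one(1)[OF r]] assms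
      norm_triangle_ineq2[of 1 "pser (\<lambda>k. of_real (diffs u k)) z"]
    by simp
  finally show ?thesis .
qed

lemma Phi_uv_eq:
  assumes "j \<in> {m, n}" "norm z < 1"
  shows "Phi_uv j z =
    z - pser (\<lambda>k. of_real (C j k * u k)) z
      + (-1) ^ j * (-1) ^ (m - 1) * cnj (pser (\<lambda>k. of_real (C j k * v k)) z)"
  using PhiOp_h_g_coeffs converges_in_disc_C_u[OF assms(1)] converges_in_disc_C_v[OF assms(1)] assms(2)
  by (simp add: converges_in_disc_def)

lemma pser_mixed_coeffs:
  assumes "w \<in> {u, v}" "norm z < 1"
  shows "pser (\<lambda>k. of_real (mixed_coeffs \<kappa> w k)) z =
    pser (\<lambda>k. of_real (C m k * w k)) z + of_real \<kappa> * pser (\<lambda>k. of_real (C n k * w k)) z"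
proof -
  have "summable (\<lambda>k. of_real (C j k * w k) * z ^ k)" if "j \<in> {m, n}" for j
    using assms that converges_in_disc_C_u converges_in_disc_C_v by (auto simp: converges_in_disc_def)
  then show ?thesis using sums_mixed_coeffs[of w z \<kappa>] by (simp add: pser_def sums_iff)
qed

lemma norm_pser_mixed_coeffs_le:
  assumes "(w, w') \<in> {(u, a), (v, b)}" "\<bar>\<kappa>\<bar> \<le> 1" "norm z < 1"
  shows "norm (pser (\<lambda>k. of_real (mixed_coeffs \<kappa> w k)) z) \<le> (\<Sum>k. mixed_coeffs \<kappa> w' k * norm z ^ k)"
proof (rule norm_pser_le(2))
  have "\<bar>\<kappa> * C n k\<bar> \<le> C n k" for k
    using mult_right_mono[OF assms(2) Ccoef_n_nonneg[of k]] Ccoef_n_nonneg[of k] by (simp add: abs_mult)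
  then have factor_nonneg: "0 \<le> C m k + \<kappa> * C n k" for k
    using Ccoef_n_le_m[of k] by (smt (verit) abs_le_iff)
  have "0 \<le> w k" "w k \<le> w' k" for k
    using assms(1) u_nonneg u_le v_nonneg v_le by auto
  then show "norm (of_real (mixed_coeffs \<kappa> w k) :: complex) \<le> mixed_coeffs \<kappa> w' k" for k
    unfolding norm_of_real mixed_coeffs_def using factor_nonneg[of k]
    by (simp add: abs_mult mult_left_mono)
  show "summable (\<lambda>k. mixed_coeffs \<kappa> w' k * norm z ^ k)"
    using assms(1,3) sums_mixed_coeffs_real[of w' "norm z" \<kappa>] sums_summable by auto
qed simp

lemma Phi_uv_comb:
  assumes "1 \<le> m" "norm z < 1"
  shows "Phi_uv m z + of_real \<kappa> * Phi_uv n z =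
    of_real (1 + \<kappa>) * z - (pser (\<lambda>k. of_real (mixed_coeffs \<kappa> u k)) z +
      cnj (pser (\<lambda>k. of_real (mixed_coeffs (- (\<kappa> * ((-1) ^ n * (-1) ^ (m - 1)))) v k)) z))"
proof -
  define P where "P j w = pser (\<lambda>k. of_real (C j k * w k)) z" for j w
  have Phi_m: "Phi_uv m z = z - P m u - cnj (P m v)"
    using Phi_uv_eq[of m z] assms neg_one_power_mult_pred[OF \<open>1 \<le> m\<close>, where 'a = complex]
    by (simp add: P_def)
  have Phi_n: "Phi_uv n z = z - P n u + (-1) ^ n * (-1) ^ (m - 1) * cnj (P n v)"
    using Phi_uv_eq[of n z] assms by (simp add: P_def)
  show ?thesis
    unfolding Phi_m Phi_n using pser_mixed_coeffs[of u z] pser_mixed_coeffs[of v z] assms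
    by (simp add: P_def algebra_simps)
qed

lemma norm_Phi_uv_comb_le:
  assumes "1 \<le> m" "norm z < 1" "\<bar>\<kappa>\<bar> \<le> 1"
  shows "norm (Phi_uv m z + of_real \<kappa> * Phi_uv n z - of_real (1 + \<kappa>) * z)
    \<le> (\<Sum>k. mixed_coeffs \<kappa> a k * norm z ^ k) +
      (\<Sum>k. mixed_coeffs (- (\<kappa> * ((-1) ^ n * (-1) ^ (m - 1)))) b k * norm z ^ k)"
proof -
  define \<kappa>' :: real where "\<kappa>' = - (\<kappa> * ((-1) ^ n * (-1) ^ (m - 1)))"
  define X Y where "X = pser (\<lambda>k. of_real (mixed_coeffs \<kappa> u k)) z"
    and "Y = pser (\<lambda>k. of_real (mixed_coeffs \<kappa>' v k)) z"
  have "\<bar>\<kappa>'\<bar> \<le> 1" using assms(3) by (simp add: \<kappa>'_def abs_mult)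
  have "Phi_uv m z + of_real \<kappa> * Phi_uv n z - of_real (1 + \<kappa>) * z = - (X + cnj Y)"
    unfolding Phi_uv_comb[OF assms(1,2)] X_def Y_def \<kappa>'_def by simp
  then have "norm (Phi_uv m z + of_real \<kappa> * Phi_uv n z - of_real (1 + \<kappa>) * z) \<le> norm X + norm Y"
    using norm_triangle_ineq[of X "cnj Y"] by (simp only: norm_minus_cancel complex_mod_cnj)
  also have "\<dots> \<le> (\<Sum>k. mixed_coeffs \<kappa> a k * norm z ^ k) + (\<Sum>k. mixed_coeffs \<kappa>' b k * norm z ^ k)"
    using norm_pser_mixed_coeffs_le[of u a \<kappa> z] norm_pser_mixed_coeffs_le[of v b \<kappa>' z] assms \<open>\<bar>\<kappa>'\<bar> \<le> 1\<close>
    by (intro add_mono) (simp_all add: X_def Y_def)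
  finally show ?thesis by (simp only: \<kappa>'_def)
qed

lemma Re_Phi_quotient_gt:
  assumes "0 \<le> \<eta>" "\<eta> < 1" "1 \<le> m" and z: "z \<in> ball 0 1 - {0}"
  shows "\<eta> < Re (Phi_uv m z / Phi_uv n z)"
    (is "_ < Re (?U / ?V)")
proof -
  define r where "r = norm z"
  have r: "0 < r" "r < 1" "norm z < 1" using z by (auto simp: r_def)
  define s c :: real where "s = (-1) ^ n * (-1) ^ (m - 1)" and "c = 1 - 2 * \<eta>"
  have "\<bar>c\<bar> \<le> 1" using assms by (simp add: c_def)
  define R where "R \<kappa> w = (\<Sum>k. mixed_coeffs \<kappa> w k * r ^ k)" for \<kappa> w
  have upper: "norm (?U - ?V) \<le> R (-1) a + R s b"
    using norm_Phi_uv_comb_le[of z "-1"] assms r by (simp add: R_def r_def s_def)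
  have "norm (?U + of_real c * ?V - of_real (1 + c) * z) \<le> R c a + R (- (c * s)) b"
    using norm_Phi_uv_comb_le[of z c] \<open>\<bar>c\<bar> \<le> 1\<close> assms r by (simp add: R_def r_def s_def)
  moreover have "norm (of_real (1 + c) * z) = (1 + c) * r"
    using \<open>\<bar>c\<bar> \<le> 1\<close> unfolding norm_mult norm_of_real r_def by simp
  ultimately have lower: "(1 + c) * r - (R c a + R (- (c * s)) b) \<le> norm (?U + of_real c * ?V)"
    using norm_triangle_ineq3[of "?U + of_real c * ?V" "of_real (1 + c) * z"] by linarith
  have "R (-1) a + R c a = 2 * R (- \<eta>) a" "R s b + R (- (c * s)) b = 2 * R (s * \<eta>) b"
    using sums_mixed_coeffs_real[of a r] sums_mixed_coeffs_real[of b r] r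
    by (simp_all add: R_def c_def sums_iff algebra_simps)
  moreover have "R (- \<eta>) a + R (s * \<eta>) b < (1 - \<eta>) * r"
    using mixed_coeffs_sum_lt[OF \<open>0 \<le> \<eta>\<close> \<open>1 \<le> m\<close> r(1,2)] by (simp add: R_def s_def)
  ultimately have "norm (?U - ?V) < norm (?U + of_real (1 - 2 * \<eta>) * ?V)"
    using upper lower by (simp add: c_def algebra_simps)
  then show ?thesis by (rule Re_divide_gt_if_norm_diff_lt[OF \<open>\<eta> < 1\<close>])
qed

lemma SH_u_v:
  assumes "0 \<le> \<eta>" "\<eta> < 1" "1 \<le> m"
  shows "SH \<alpha> \<beta> \<gamma> \<delta> p q m n \<eta> (h_coeffs u) (g_coeffs m v)"
proof -
  have "u 0 = 0" "u 1 = 0" "v 0 = 0"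
    using initial_coeffs u_nonneg u_le v_nonneg v_le by (metis order_antisym)+
  moreover have "v 1 < 1"
    using initial_coeffs v_le by (metis le_less_trans)
  ultimately have "h_coeffs u 0 = 0" "h_coeffs u 1 = 1" "g_coeffs m v 0 = 0" "norm (g_coeffs m v 1) < 1"
    using v_nonneg[of 1] by (simp_all add: h_coeffs_def g_coeffs_def id_coeffs_def norm_mult norm_power)
  moreover have "converges_in_disc (\<lambda>k. of_real (C j k) * h_coeffs u k)"
    "converges_in_disc (\<lambda>k. of_real (C j k) * g_coeffs m v k)" if "j \<in> {m, n}" for j
    using converges_in_disc_h_coeffs_iff[of "C j" u, OF Ccoef_one(1)]
      converges_in_disc_g_coeffs_iff[of "C j" m v]
      converges_in_disc_C_u[OF that] converges_in_disc_C_v[OF that] by simp_all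
  ultimately show ?thesis
    unfolding SH_def using converges_in_disc_h_g_coeffs_u_v inj_on_harm sense_preserving
      Re_Phi_quotient_gt[OF assms]
    by blast
qed

end

lemma SHbar_if_dominated:
  assumes params: "0 < \<alpha>" "0 < \<beta>" "0 < \<gamma>" "0 < \<delta>" "0 < p" "0 < q"
    and "0 \<le> \<eta>" "\<eta> < 1" "1 \<le> m" "n \<le> m"
    and SHbar: "SHbar \<alpha> \<beta> \<gamma> \<delta> p q m n \<eta> a b"
    and u: "\<And>k. 2 \<le> k \<Longrightarrow> 0 \<le> u k \<and> u k \<le> a k"
    and v: "\<And>k. 1 \<le> k \<Longrightarrow> 0 \<le> v k \<and> v k \<le> b k"
  shows "SHbar \<alpha> \<beta> \<gamma> \<delta> p q m n \<eta> u v"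
proof -
  interpret SH_dominated \<alpha> \<beta> \<gamma> \<delta> p q m n \<eta> "coeffs_from 2 a" "coeffs_from 1 b"
    "coeffs_from 2 u" "coeffs_from 1 v"
    using SHbar u v Ccoef_nonneg[OF params] Ccoef_mono[OF params \<open>n \<le> m\<close>]
    by unfold_locales (auto simp: SHbar_iff_SH coeffs_from_def)
  show ?thesis
    using SH_u_v u v assms by (auto simp: SHbar_iff_SH coeffs_from_def)
qed

lemma SHbar_coeffs_le_one:
  assumes "SHbar \<alpha> \<beta> \<gamma> \<delta> p q m n \<eta> a b"
  shows "2 \<le> k \<Longrightarrow> a k \<le> 1" and "1 \<le> k \<Longrightarrow> b k \<le> 1"
proof -
  interpret SH_nonneg_coeffs \<alpha> \<beta> \<gamma> \<delta> p q m n \<eta> "coeffs_from 2 a" "coeffs_from 1 b"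
    using assms by unfold_locales (auto simp: SHbar_iff_SH)
  show "2 \<le> k \<Longrightarrow> a k \<le> 1" and "1 \<le> k \<Longrightarrow> b k \<le> 1"
    using coeffs_le_one[of k] by (auto simp: coeffs_from_def)
qed

lemma SHbar_antimono:
  assumes "SHbar \<alpha> \<beta> \<gamma> \<delta> p q m n \<eta> a b" "\<rho> \<le> \<eta>"
  shows "SHbar \<alpha> \<beta> \<gamma> \<delta> p q m n \<rho> a b"
  using assms unfolding SHbar_def SH_def by (meson le_less_trans)

theorem theorem4p1:
  fixes \<alpha> \<beta> \<gamma> \<delta> p q \<rho> \<eta> :: real and m n :: nat and a b A B :: "nat \<Rightarrow> real"
  assumes "\<alpha> > 0" "\<beta> > 0" "\<gamma> > 0" "\<delta> > 0" "p > 0" "q > 0" "q \<le> \<alpha> + p"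
    and "0 \<le> \<rho>" "\<rho> \<le> \<eta>" "\<eta> < 1"
    and "m \<ge> 1" "m > n"
    and "SHbar \<alpha> \<beta> \<gamma> \<delta> p q m n \<eta> a b"
    and "SHbar \<alpha> \<beta> \<gamma> \<delta> p q m n \<rho> A B"
  shows "SHbar \<alpha> \<beta> \<gamma> \<delta> p q m n \<eta> (\<lambda>k. a k * A k) (\<lambda>k. b k * B k) \<and>
    (\<forall>a' b'. SHbar \<alpha> \<beta> \<gamma> \<delta> p q m n \<eta> a' b' \<longrightarrow> SHbar \<alpha> \<beta> \<gamma> \<delta> p q m n \<rho> a' b')"
proof
  have nonneg: "\<And>k. 2 \<le> k \<Longrightarrow> 0 \<le> a k \<and> 0 \<le> A k" "\<And>k. 1 \<le> k \<Longrightarrow> 0 \<le> b k \<and> 0 \<le> B k"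
    using assms(13,14) by (simp_all add: SHbar_def)
  show "SHbar \<alpha> \<beta> \<gamma> \<delta> p q m n \<eta> (\<lambda>k. a k * A k) (\<lambda>k. b k * B k)"
  proof (rule SHbar_if_dominated[OF assms(1-6) _ assms(10,11) _ assms(13)])
    show "0 \<le> a k * A k \<and> a k * A k \<le> a k" if "2 \<le> k" for k
      using nonneg(1)[OF that] SHbar_coeffs_le_one(1)[OF assms(14) that] by (simp add: mult_left_le)
    show "0 \<le> b k * B k \<and> b k * B k \<le> b k" if "1 \<le> k" for k
      using nonneg(2)[OF that] SHbar_coeffs_le_one(2)[OF assms(14) that] by (simp add: mult_left_le)
  qed (use assms in auto)
  show "\<forall>a' b'. SHbar \<alpha> \<beta> \<gamma> \<delta> p q m n \<eta> a' b' \<longrightarrow> SHbar \<alpha> \<beta> \<gamma> \<delta> p q m n \<rho> a' b'"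
    using SHbar_antimono assms(9) by blast
qed

end
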